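(* Let $n=d_z\le d=d_x$. Suppose that for every $\theta\in\Theta$: $f_\theta:\mathcal{X}\to\mathbb{R}^n$ is differentiable, surjective onto $\mathbb{R}^n$, and its Jacobian has full rank $n$ everywhere; and there exist $2n+1$ points $y^0,\dots,y^{2n}\in\mathcal{Y}$ such that the $2n\times 2n$ matrix $\tilde R_\theta=\big(\tilde g_\theta(y^1)-\tilde g_\theta(y^0),\dots,\tilde g_\theta(y^{2n})-\tilde g_\theta(y^0)\big)$ is invertible. Then for any $\theta,\theta'\in\Theta$, if $\tilde p_\theta(x\mid y)=\tilde p_{\theta'}(x\mid y)$ for all $x,y$, there exist a permutation $\sigma$ of $\{1,\dots,n\}$, nonzero scalars $a_i$ and scalars $c_i$ such that $f_{i,\theta}(x)=a_if_{\sigma(i),\theta'}(x)+c_i$ for all $i$ and all $x\in\mathcal{X}$.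
   Context: Let $\mathcal{X}\subset\mathbb{R}^{d_x}$, $\mathcal{Y}\subset\mathbb{R}^{d_y}$. A parameter set $\Theta$ indexes pairs $f_\theta=(f_{1,\theta},\dots,f_{n,\theta}):\mathcal{X}\to\mathbb{R}^{n}$ and $\tilde g_\theta:\mathcal{Y}\to\mathbb{R}^{2n}$. The augmented feature map is $\tilde f_\theta(x)=(f_{1,\theta}(x),f_{1,\theta}(x)^2,\dots,f_{n,\theta}(x),f_{n,\theta}(x)^2)\in\mathbb{R}^{2n}$, and the augmented conditional energy model is $\tilde p_\theta(x\mid y)=\exp(-\tilde f_\theta(x)^\top\tilde g_\theta(y))/\tilde Z(y;\theta)$, where $\Theta$ is such that $\tilde Z(y;\theta)=\int_{\mathcal{X}}\exp(-\tilde f_\theta(x)^\top\tilde g_\theta(y))\,dx<\infty$ for all $y$. *)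

theory Defs
  imports "HOL-Analysis.Analysis"
begin

text \<open>Augmented feature map: the index (i, False) carries f_i(x), the index (i, True)
  carries f_i(x)^2, so that the 2n coordinates are (f_1, f_1^2, ..., f_n, f_n^2).\<close>
definition aug_feat :: "('x \<Rightarrow> real^'n) \<Rightarrow> 'x \<Rightarrow> real^('n \<times> bool)" where
  "aug_feat f x = (\<chi> p. if snd p then (f x $ fst p)^2 else f x $ fst p)"

definition aug_energy ::
  "(real^'d \<Rightarrow> real^'n) \<Rightarrow> ('y \<Rightarrow> real^('n \<times> bool)) \<Rightarrow> 'y \<Rightarrow> real^'d \<Rightarrow> real" where
  "aug_energy f g y x = exp (- (aug_feat f x \<bullet> g y))"

definition aug_Z ::
  "(real^'d) set \<Rightarrow> (real^'d \<Rightarrow> real^'n) \<Rightarrow> ('y \<Rightarrow> real^('n \<times> bool)) \<Rightarrow> 'y \<Rightarrow> real" where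
  "aug_Z X f g y = integral X (aug_energy f g y)"

definition aug_p ::
  "(real^'d) set \<Rightarrow> (real^'d \<Rightarrow> real^'n) \<Rightarrow> ('y \<Rightarrow> real^('n \<times> bool)) \<Rightarrow> real^'d \<Rightarrow> 'y \<Rightarrow> real" where
  "aug_p X f g x y = aug_energy f g y x / aug_Z X f g y"

end

theory Submission
  imports Defs
begin

text \<open>Equal densities make the energies \<open>f~(x)\<^sup>T g~(y)\<close> of the two parameters differ only by
  the log-ratio of the partition functions, a function of \<open>y\<close> alone. Differencing against
  \<open>y\<^sup>0\<close> and inverting \<open>R~\<^sub>\<theta>\<close> shows that the augmented features of \<open>\<theta>\<close> are an affine
  image of those of \<open>\<theta>'\<close>. So each \<open>f\<^sub>i\<^sub>,\<^sub>\<theta>\<close> is a separable quadratic \<open>q\<close> in the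
  coordinates of \<open>f\<^sub>\<theta>\<^sub>'\<close> whose square is again such a quadratic; as \<open>f\<^sub>\<theta>\<^sub>'\<close> is onto, this is a
  polynomial identity on \<open>\<real>\<^sup>n\<close>, forcing \<open>q\<close> to be affine in a single coordinate.
  Exchanging \<open>\<theta>\<close> and \<open>\<theta>'\<close> and composing the two affine relations yields the identity
  matrix, so the selected coordinates form a permutation.\<close>

lemma vector_matrix_mult_inner_column:
  "(w v* M) $ k = w \<bullet> column k (M :: real^'m^'n)"
  by (simp add: vector_matrix_mult_def inner_vec_def column_def mult.commute)

lemma sq_quadratic_identity_lead_zero:
  fixes a b c a' b' c' :: real
  assumes h: "\<And>t. (a*t + b*t^2 + c)^2 = a'*t + b'*t^2 + c'"
  shows "b = 0"
proof -
  \<comment> \<open>The fourth finite difference at \<open>-2, \<dots>, 2\<close> kills the quadratic side and leaves \<open>24 b\<^sup>2\<close>.\<close>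
  have "(2*a+4*b+c)^2 - 4*(a+b+c)^2 + 6*c^2 - 4*(-a+b+c)^2 + (-2*a+4*b+c)^2 = 24*b^2"
    by algebra
  moreover have "(2*a+4*b+c)^2 - 4*(a+b+c)^2 + 6*c^2 - 4*(-a+b+c)^2 + (-2*a+4*b+c)^2 = 0"
    using h[of 2] h[of 1] h[of 0] h[of "-1"] h[of "-2"] by (simp add: mult.commute)
  ultimately show ?thesis by simp
qed

lemma sq_affine_identity_cross_zero:
  fixes a b c a' b' a2 b2 c' :: real
  assumes h: "\<And>s t. (a * s + b * t + c)^2 = a' * s + a2 * s^2 + b' * t + b2 * t^2 + c'"
  shows "a * b = 0"
proof -
  have "(a+b+c)^2 - (a-b+c)^2 - (-a+b+c)^2 + (-a-b+c)^2 = 8*(a*b)" by algebra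
  then show ?thesis using h[of 1 1] h[of 1 "-1"] h[of "-1" 1] h[of "-1" "-1"] by simp
qed

lemma sum_vec_single_support:
  fixes h :: "'n::finite \<Rightarrow> 'a::zero \<Rightarrow> 'b::comm_monoid_add"
  assumes "\<And>l. h l 0 = 0"
  shows "(\<Sum>l\<in>UNIV. h l ((\<chi> m. if m = j then s else 0) $ l)) = h j s"
  using assms by (simp add: if_distrib[of "h _"] cong: if_cong)

lemma sum_vec_pair_support:
  fixes h :: "'n::finite \<Rightarrow> 'a::zero \<Rightarrow> 'b::comm_monoid_add"
  assumes "\<And>l. h l 0 = 0" and "j \<noteq> k"
  shows "(\<Sum>l\<in>UNIV. h l ((\<chi> m. if m = j then s else if m = k then t else 0) $ l)) = h j s + h k t"
proof -
  have "(\<Sum>l\<in>UNIV. h l ((\<chi> m. if m = j then s else if m = k then t else 0) $ l))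
     = (\<Sum>l\<in>UNIV. (if l = j then h j s else 0) + (if l = k then h k t else 0))"
    by (rule sum.cong) (use assms in auto)
  then show ?thesis by (simp add: sum.distrib)
qed

lemma sq_separable_quadratic_identity_coeffs:
  fixes a b a' b' :: "'n::finite \<Rightarrow> real"
  assumes H: "\<And>z::real^'n. ((\<Sum>l\<in>UNIV. a l * z$l + b l * (z$l)^2) + c)^2
                = (\<Sum>l\<in>UNIV. a' l * z$l + b' l * (z$l)^2) + c'"
  shows sq_separable_quadratic_identity_no_square: "b j = 0"
    and sq_separable_quadratic_identity_cross: "j \<noteq> k \<Longrightarrow> a j * a k = 0"
proof -
  have no_square: "b l = 0" for l
  proof (rule sq_quadratic_identity_lead_zero)
    fix t
    show "(a l * t + b l * t^2 + c)^2 = a' l * t + b' l * t^2 + c'"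
      using H[of "\<chi> m. if m = l then t else 0"]
        sum_vec_single_support[of "\<lambda>l r. a l * r + b l * r^2" l t]
        sum_vec_single_support[of "\<lambda>l r. a' l * r + b' l * r^2" l t]
      by simp
  qed
  then show "b j = 0" .
  assume "j \<noteq> k"
  show "a j * a k = 0"
  proof (rule sq_affine_identity_cross_zero)
    fix s t
    show "(a j * s + a k * t + c)^2 = a' j * s + b' j * s^2 + a' k * t + b' k * t^2 + c'"
      using H[of "\<chi> m. if m = j then s else if m = k then t else 0"]
        sum_vec_pair_support[of "\<lambda>l r. a l * r + b l * r^2" j k s t]
        sum_vec_pair_support[of "\<lambda>l r. a' l * r + b' l * r^2" j k s t] \<open>j \<noteq> k\<close> no_square
      by (simp add: algebra_simps)
  qed
qed

lemma affine_roundtrip_matrix_inverse: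
  fixes F :: "'x \<Rightarrow> 'a::field^'n" and F' :: "'x \<Rightarrow> 'a^'m"
  assumes surj: "F ` X = UNIV"
    and F: "\<forall>x\<in>X. F x = \<alpha> *v F' x + c"
    and F': "\<forall>x\<in>X. F' x = \<beta> *v F x + d"
  shows "\<alpha> ** \<beta> = mat 1"
proof -
  have roundtrip: "(\<alpha> ** \<beta>) *v z + (\<alpha> *v d + c) = z" for z
  proof -
    obtain x where x: "x \<in> X" and z: "F x = z" using surj by (metis UNIV_I imageE)
    have "z = \<alpha> *v (\<beta> *v z + d) + c"
      using F[rule_format, OF x] F'[rule_format, OF x] z by metis
    then show ?thesis
      by (simp add: matrix_vector_right_distrib matrix_vector_mul_assoc add.assoc)
  qed
  have "\<alpha> *v d + c = 0" using roundtrip[of 0] by simp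
  with roundtrip have "(\<alpha> ** \<beta>) *v z = mat 1 *v z" for z by simp
  then show ?thesis by (simp add: matrix_eq)
qed

lemma row_monomial_inverse_permutes:
  fixes \<alpha> \<beta> :: "'a::field^'n^'n"
  assumes inv: "\<alpha> ** \<beta> = mat 1"
    and monomial: "\<And>i j k. j \<noteq> k \<Longrightarrow> \<alpha>$i$j * \<alpha>$i$k = 0"
  shows "\<exists>\<sigma>. \<sigma> permutes UNIV \<and> (\<forall>i. \<alpha>$i$\<sigma> i \<noteq> 0) \<and> (\<forall>i l. l \<noteq> \<sigma> i \<longrightarrow> \<alpha>$i$l = 0)"
proof -
  have entry: "(\<Sum>l\<in>UNIV. \<alpha>$i$l * \<beta>$l$m) = (if i = m then 1 else 0)" for i m
    using arg_cong[OF inv, of "\<lambda>A. A$i$m"] by (simp add: matrix_matrix_mult_def mat_def)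
  have "\<exists>l. \<alpha>$i$l \<noteq> 0" for i
  proof (rule ccontr)
    assume "\<nexists>l. \<alpha>$i$l \<noteq> 0"
    then show False using entry[of i i] by simp
  qed
  then obtain \<sigma> where nonzero: "\<And>i. \<alpha>$i$\<sigma> i \<noteq> 0" by metis
  have zero: "\<alpha>$i$l = 0" if "l \<noteq> \<sigma> i" for i l
    using monomial[OF that, of i] nonzero[of i] by simp
  have row_sum: "(\<Sum>l\<in>UNIV. \<alpha>$i$l * \<beta>$l$m) = \<alpha>$i$\<sigma> i * \<beta>$\<sigma> i$m" for i m
  proof -
    have "(\<Sum>l\<in>UNIV. \<alpha>$i$l * \<beta>$l$m) = (\<Sum>l\<in>UNIV. if l = \<sigma> i then \<alpha>$i$\<sigma> i * \<beta>$\<sigma> i$m else 0)"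
      by (rule sum.cong) (auto simp: zero)
    then show ?thesis by simp
  qed
  have "inj \<sigma>"
  proof (rule injI)
    fix i i' assume same: "\<sigma> i = \<sigma> i'"
    show "i = i'"
    proof (rule ccontr)
      assume "i \<noteq> i'"
      then have "\<alpha>$i'$\<sigma> i * \<beta>$\<sigma> i$i = 0" using entry[of i' i] row_sum[of i' i] same by simp
      moreover have "\<alpha>$i$\<sigma> i * \<beta>$\<sigma> i$i = 1" using entry[of i i] row_sum[of i i] by simp
      ultimately show False using nonzero[of i'] same by simp
    qed
  qed
  then have "\<sigma> permutes UNIV"
    using finite_UNIV_inj_surj[of \<sigma>] by (auto intro!: bij_imp_permutes simp: bij_def)
  with nonzero zero show ?thesis by blast
qed

lemma aug_feat_nth [simp]:
  "aug_feat F x $ (i, False) = F x $ i"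
  "aug_feat F x $ (i, True) = (F x $ i)^2"
  by (simp_all add: aug_feat_def)

lemma aug_p_eq_imp_inner_shift:
  fixes F1 F2 :: "real^'d \<Rightarrow> real^'n" and G1 G2 :: "'y \<Rightarrow> real^('n \<times> bool)"
  assumes Z1: "\<And>y. y \<in> Y \<Longrightarrow> 0 < aug_Z X F1 G1 y"
    and Z2: "\<And>y. y \<in> Y \<Longrightarrow> 0 < aug_Z X F2 G2 y"
    and eq: "\<forall>x\<in>X. \<forall>y\<in>Y. aug_p X F1 G1 x y = aug_p X F2 G2 x y"
  shows "\<exists>D. \<forall>x\<in>X. \<forall>y\<in>Y. aug_feat F1 x \<bullet> G1 y = aug_feat F2 x \<bullet> G2 y + D y"
proof (intro exI ballI)
  fix x y assume x: "x \<in> X" and y: "y \<in> Y"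
  have "ln (exp (- (aug_feat F1 x \<bullet> G1 y)) / aug_Z X F1 G1 y)
      = ln (exp (- (aug_feat F2 x \<bullet> G2 y)) / aug_Z X F2 G2 y)"
    using eq x y by (simp add: aug_p_def aug_energy_def)
  then show "aug_feat F1 x \<bullet> G1 y
      = aug_feat F2 x \<bullet> G2 y + (ln (aug_Z X F2 G2 y) - ln (aug_Z X F1 G1 y))"
    using Z1[OF y] Z2[OF y] by (simp add: ln_div)
qed

lemma aug_feat_affine_transfer:
  fixes F1 F2 :: "real^'d \<Rightarrow> real^'n" and G1 G2 :: "'y \<Rightarrow> real^('n \<times> bool)"
  assumes Z1: "\<And>y. y \<in> Y \<Longrightarrow> 0 < aug_Z X F1 G1 y"
    and Z2: "\<And>y. y \<in> Y \<Longrightarrow> 0 < aug_Z X F2 G2 y"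
    and eq: "\<forall>x\<in>X. \<forall>y\<in>Y. aug_p X F1 G1 x y = aug_p X F2 G2 x y"
    and y0: "y0 \<in> Y" and ys: "\<forall>k. ys k \<in> Y"
    and inv: "invertible (\<chi> j k. (G1 (ys k) - G1 y0) $ j :: real^('n \<times> bool)^('n \<times> bool))"
  shows "\<exists>A b. \<forall>x\<in>X. aug_feat F1 x = aug_feat F2 x v* A + b"
proof -
  obtain D where D: "\<And>x y. x \<in> X \<Longrightarrow> y \<in> Y \<Longrightarrow> aug_feat F1 x \<bullet> G1 y = aug_feat F2 x \<bullet> G2 y + D y"
    using aug_p_eq_imp_inner_shift[OF Z1 Z2 eq] by blast
  define M where "M = (\<chi> j k. (G1 (ys k) - G1 y0) $ j :: real^('n \<times> bool)^('n \<times> bool))"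
  define M' where "M' = (\<chi> j k. (G2 (ys k) - G2 y0) $ j :: real^('n \<times> bool)^('n \<times> bool))"
  obtain N where MN: "M ** N = mat 1" using inv unfolding invertible_def M_def by blast
  have columns: "column k M = G1 (ys k) - G1 y0" "column k M' = G2 (ys k) - G2 y0" for k
    by (simp_all add: column_def M_def M'_def vec_eq_iff)
  have shift: "aug_feat F1 x v* M = aug_feat F2 x v* M' + (\<chi> k. D (ys k) - D y0)" if x: "x \<in> X" for x
    using D[OF x ys[rule_format]] D[OF x y0]
    by (simp add: vec_eq_iff vector_matrix_mult_inner_column columns inner_diff_right)
  show ?thesis
  proof (intro exI ballI)
    fix x assume "x \<in> X"
    have "aug_feat F1 x = (aug_feat F1 x v* M) v* N"
      by (simp add: vector_matrix_mul_assoc MN)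
    also have "\<dots> = aug_feat F2 x v* (M' ** N) + (\<chi> k. D (ys k) - D y0) v* N"
      by (simp add: shift[OF \<open>x \<in> X\<close>] vector_matrix_left_distrib vector_matrix_mul_assoc)
    finally show "aug_feat F1 x = aug_feat F2 x v* (M' ** N) + (\<chi> k. D (ys k) - D y0) v* N" .
  qed
qed

lemma aug_feat_vector_matrix_mult:
  "(aug_feat F x v* A) $ p
     = (\<Sum>l\<in>UNIV. A$(l,False)$p * F x $ l + A$(l,True)$p * (F x $ l)^2)"
proof -
  have "(aug_feat F x v* A) $ p = (\<Sum>q\<in>UNIV \<times> UNIV. A$q$p * aug_feat F x $ q)"
    by (simp add: vector_matrix_mult_def mult.commute)
  also have "\<dots> = (\<Sum>l\<in>UNIV. \<Sum>b\<in>UNIV. A$(l,b)$p * aug_feat F x $ (l,b))"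
    by (simp add: sum.cartesian_product)
  also have "\<dots> = (\<Sum>l\<in>UNIV. A$(l,False)$p * F x $ l + A$(l,True)$p * (F x $ l)^2)"
    by (simp add: UNIV_bool add.commute)
  finally show ?thesis .
qed

lemma aug_feat_transfer_row_monomial:
  fixes F1 F2 :: "real^'d \<Rightarrow> real^'n" and G1 G2 :: "'y \<Rightarrow> real^('n \<times> bool)"
  assumes Z1: "\<And>y. y \<in> Y \<Longrightarrow> 0 < aug_Z X F1 G1 y"
    and Z2: "\<And>y. y \<in> Y \<Longrightarrow> 0 < aug_Z X F2 G2 y"
    and eq: "\<forall>x\<in>X. \<forall>y\<in>Y. aug_p X F1 G1 x y = aug_p X F2 G2 x y"
    and y0: "y0 \<in> Y" and ys: "\<forall>k. ys k \<in> Y"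
    and inv: "invertible (\<chi> j k. (G1 (ys k) - G1 y0) $ j :: real^('n \<times> bool)^('n \<times> bool))"
    and surj: "F2 ` X = UNIV"
  shows "\<exists>\<alpha> c. (\<forall>x\<in>X. F1 x = \<alpha> *v F2 x + c) \<and> (\<forall>i j k. j \<noteq> k \<longrightarrow> \<alpha>$i$j * \<alpha>$i$k = 0)"
proof -
  obtain A b where A: "\<And>x. x \<in> X \<Longrightarrow> aug_feat F1 x = aug_feat F2 x v* A + b"
    using aug_feat_affine_transfer[OF Z1 Z2 eq y0 ys inv] by blast
  define quad where "quad p z = (\<Sum>l\<in>UNIV. A$(l,False)$p * z$l + A$(l,True)$p * (z$l)^2) + b$p"
    for p and z :: "real^'n"
  have coord: "F1 x $ i = quad (i,False) (F2 x)" "(F1 x $ i)^2 = quad (i,True) (F2 x)"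
    if "x \<in> X" for x i
    using arg_cong[OF A[OF that], of "\<lambda>v. v $ (i,False)"] arg_cong[OF A[OF that], of "\<lambda>v. v $ (i,True)"]
    by (simp_all add: quad_def aug_feat_vector_matrix_mult)
  have sq: "(quad (i,False) z)^2 = quad (i,True) z" for i z
  proof -
    obtain x where "x \<in> X" "F2 x = z" using surj by (metis UNIV_I imageE)
    then show ?thesis using coord[of x i] by simp
  qed
  define \<alpha> where "\<alpha> = (\<chi> i l. A$(l,False)$(i,False))"
  show ?thesis
  proof (intro exI conjI ballI allI impI)
    fix x assume "x \<in> X"
    show "F1 x = \<alpha> *v F2 x + (\<chi> i. b$(i,False))"
      using coord(1)[OF \<open>x \<in> X\<close>] sq_separable_quadratic_identity_no_square[OF sq[unfolded quad_def]]
      by (simp add: vec_eq_iff matrix_vector_mult_def \<alpha>_def quad_def mult.commute)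
  next
    fix i j k :: 'n assume "j \<noteq> k"
    show "\<alpha>$i$j * \<alpha>$i$k = 0"
      using sq_separable_quadratic_identity_cross[OF sq[unfolded quad_def] \<open>j \<noteq> k\<close>]
      by (simp add: \<alpha>_def)
  qed
qed

theorem mainTheorem3:
  fixes X :: "(real^'d) set"
    and Y :: "(real^'dy) set"
    and Theta :: "'th set"
    and f :: "'th \<Rightarrow> real^'d \<Rightarrow> real^'n"
    and g :: "'th \<Rightarrow> real^'dy \<Rightarrow> real^('n \<times> bool)"
  assumes dim: "CARD('n) \<le> CARD('d)"
    and Z_fin: "\<And>th y. th \<in> Theta \<Longrightarrow> y \<in> Y \<Longrightarrow>
                  aug_energy (f th) (g th) y integrable_on X \<and> 0 < aug_Z X (f th) (g th) y"
    and diff: "\<And>th x. th \<in> Theta \<Longrightarrow> x \<in> X \<Longrightarrow>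
                  \<exists>f'. (f th has_derivative f') (at x within X) \<and> rank (matrix f') = CARD('n)"
    and surj: "\<And>th. th \<in> Theta \<Longrightarrow> f th ` X = UNIV"
    and var: "\<And>th. th \<in> Theta \<Longrightarrow>
                  \<exists>y0 ys. y0 \<in> Y \<and> (\<forall>k. ys k \<in> Y) \<and>
                    invertible (\<chi> j k. (g th (ys k) - g th y0) $ j :: real^('n \<times> bool)^('n \<times> bool))"
    and th: "th \<in> Theta" and th': "th' \<in> Theta"
    and eq: "\<forall>x\<in>X. \<forall>y\<in>Y. aug_p X (f th) (g th) x y = aug_p X (f th') (g th') x y"
  shows "\<exists>\<sigma> a c. \<sigma> permutes (UNIV :: 'n set) \<and> (\<forall>i. a i \<noteq> (0::real)) \<and>
           (\<forall>i. \<forall>x\<in>X. f th x $ i = a i * f th' x $ (\<sigma> i) + c i)"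
proof -
  have Z: "\<And>y. y \<in> Y \<Longrightarrow> 0 < aug_Z X (f th) (g th) y"
    and Z': "\<And>y. y \<in> Y \<Longrightarrow> 0 < aug_Z X (f th') (g th') y"
    using Z_fin th th' by blast+
  have eq': "\<forall>x\<in>X. \<forall>y\<in>Y. aug_p X (f th') (g th') x y = aug_p X (f th) (g th) x y"
    using eq by simp
  obtain y0 ys where y0: "y0 \<in> Y" and ys: "\<forall>k. ys k \<in> Y" and inv:
    "invertible (\<chi> j k. (g th (ys k) - g th y0) $ j :: real^('n \<times> bool)^('n \<times> bool))"
    using var[OF th] by blast
  obtain \<alpha> c where \<alpha>: "\<forall>x\<in>X. f th x = \<alpha> *v f th' x + c"
    and monomial: "\<forall>i j k. j \<noteq> k \<longrightarrow> \<alpha>$i$j * \<alpha>$i$k = 0"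
    using aug_feat_transfer_row_monomial[OF Z Z' eq y0 ys inv surj[OF th']] by metis
  obtain y0' ys' where y0': "y0' \<in> Y" and ys': "\<forall>k. ys' k \<in> Y" and inv':
    "invertible (\<chi> j k. (g th' (ys' k) - g th' y0') $ j :: real^('n \<times> bool)^('n \<times> bool))"
    using var[OF th'] by blast
  obtain \<beta> d where \<beta>: "\<forall>x\<in>X. f th' x = \<beta> *v f th x + d"
    using aug_feat_transfer_row_monomial[OF Z' Z eq' y0' ys' inv' surj[OF th]] by metis
  have inverse: "\<alpha> ** \<beta> = mat 1"
    using affine_roundtrip_matrix_inverse[OF surj[OF th] \<alpha> \<beta>] .
  obtain \<sigma> where \<sigma>: "\<sigma> permutes UNIV" and nonzero: "\<forall>i. \<alpha>$i$\<sigma> i \<noteq> 0"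
    and zero: "\<forall>i l. l \<noteq> \<sigma> i \<longrightarrow> \<alpha>$i$l = 0"
    using row_monomial_inverse_permutes[OF inverse monomial[rule_format]] by blast
  have "(\<alpha> *v z) $ i = \<alpha>$i$\<sigma> i * z $ \<sigma> i" for z i
    unfolding matrix_vector_mult_def using zero
    by (simp add: sum.remove[of _ "\<sigma> i"] sum.neutral)
  with \<sigma> nonzero \<alpha> show ?thesis
    by (intro exI[of _ \<sigma>] exI[of _ "\<lambda>i. \<alpha>$i$\<sigma> i"] exI[of _ "\<lambda>i. c$i"]) auto
qed

end
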